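(* Let $\mathcal{S}=\partial\Omega$ where $\Omega\subset\mathbb{R}^n$ is a non-empty bounded open set with $C^k$ boundary, $k\ge 2$. Let $q\in\mathbb{R}^n\setminus\mathcal{S}$ and suppose that $m=|\Gamma(q)|<\infty$, with $\Gamma(q)=\{p_1,\dots,p_m\}$. Then there exist $r>\mathrm{dist}(q,\mathcal{S})$ and pairwise-disjoint connected closed subsets $S_1,\dots,S_m\subset\mathcal{S}$ with $$\overline{B}(q,r)\cap\mathcal{S}\supset\bigsqcup_{i=1}^m S_i,\qquad p_i\in\mathrm{int}_{\mathcal{S}}(S_i)\ \text{ for each } i,$$ where $\mathrm{int}_{\mathcal{S}}$ denotes interior in the induced topology of $\mathcal{S}$. Moreover, setting $\alpha_i=\mathrm{dist}(\cdot,S_i)$, there exists a neighborhood $N$ of $q$ such that $\mathrm{dist}(x,\mathcal{S})=\min_{i=1,\dots,m}\alpha_i(x)$ for all $x\in N$.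
   Context: For $A\subset\mathbb{R}^n$, $\mathrm{dist}(q,A)=\inf_{y\in A}\|q-y\|$. For $q\in\mathbb{R}^n$, $\Gamma(q)=\{p\in\mathcal{S}: \|q-p\|=\mathrm{dist}(q,\mathcal{S})\}$ is the set of contact (closest) points of $q$ on $\mathcal{S}$. *)

theory Defs
  imports "HOL-Analysis.Analysis"
begin

fun Ck_on :: "nat \<Rightarrow> 'a::euclidean_space set \<Rightarrow> ('a \<Rightarrow> real) \<Rightarrow> bool" where
  "Ck_on 0 U f = continuous_on U f"
| "Ck_on (Suc k) U f =
     (f differentiable_on U \<and>
      (\<forall>v. Ck_on k U (\<lambda>x. frechet_derivative f (at x) v)))"

text \<open>An open set has C^k boundary if near each boundary point it is, after a
  choice of unit direction v, the region strictly above the graph of a C^k function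
  defined on the hyperplane orthogonal to v (here g is C^k on the whole space and
  evaluated at the orthogonal projection onto that hyperplane).\<close>
definition Ck_boundary :: "nat \<Rightarrow> 'a::euclidean_space set \<Rightarrow> bool" where
  "Ck_boundary k \<Omega> \<longleftrightarrow>
     (\<forall>p\<in>frontier \<Omega>. \<exists>r>0. \<exists>v g. norm v = 1 \<and> Ck_on k UNIV g \<and>
        \<Omega> \<inter> ball p r = {x \<in> ball p r. g (x - (x \<bullet> v) *\<^sub>R v) < x \<bullet> v})"

definition contact_points :: "'a::metric_space set \<Rightarrow> 'a \<Rightarrow> 'a set" where
  "contact_points S q = {p \<in> S. dist q p = infdist q S}"

end

theory Submission
  imports Defs
begin

text \<open>Near a boundary point p, the boundary S is the graph of a continuous function over
  a hyperplane, and moving every point of a small ball parallel to the chart direction onto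
  that graph retracts the ball onto S. The image of a small closed ball is therefore a
  compact connected piece of S that contains a relative neighbourhood of p. Taking these
  pieces around the finitely many contact points of radius below a third of their mutual
  distances makes them disjoint. The rest of S, outside the relative interiors of the
  pieces, is closed and misses the contact points, so it stays at distance at least
  dist(q, S) + \<eta> from q; for x within \<eta>/2 of q every nearest point of S to x then
  lies in one of the pieces, so dist(x, S) is the least distance from x to a piece.\<close>

lemma Ck_on_imp_continuous_on: "Ck_on k U f \<Longrightarrow> continuous_on U f"
  by (cases k) (auto intro: differentiable_imp_continuous_on)

lemma frontier_local_subgraph_iff:
  fixes \<Omega> :: "'a::real_inner set"
  assumes "open \<Omega>" and "v \<bullet> v = 1" and "continuous_on UNIV h"
    and h_invariant: "\<And>x t. h (x + t *\<^sub>R v) = h x"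
    and local_subgraph: "\<Omega> \<inter> ball p r = {x \<in> ball p r. h x < x \<bullet> v}"
    and x: "x \<in> ball p r"
  shows "x \<in> frontier \<Omega> \<longleftrightarrow> h x = x \<bullet> v"
proof -
  have in_\<Omega>: "y \<in> \<Omega> \<longleftrightarrow> h y < y \<bullet> v" if "y \<in> ball p r" for y
    using that local_subgraph by blast
  have frontier_eq: "frontier \<Omega> = closure \<Omega> - \<Omega>"
    using \<open>open \<Omega>\<close> by (simp add: frontier_def interior_open)
  show ?thesis
  proof
    assume "x \<in> frontier \<Omega>"
    then have "x \<in> closure \<Omega>" and "x \<notin> \<Omega>" using frontier_eq by auto
    then have "h x \<ge> x \<bullet> v" using in_\<Omega>[OF x] by auto
    moreover have "\<not> h x > x \<bullet> v"
    proof
      assume "h x > x \<bullet> v"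
      define U where "U = ball p r \<inter> {y. y \<bullet> v < h y}"
      have "open U"
        unfolding U_def
        by (intro open_Int open_ball open_Collect_less continuous_intros
            continuous_on_subset[OF \<open>continuous_on UNIV h\<close>]) auto
      moreover have "U \<inter> \<Omega> = {}" using in_\<Omega> unfolding U_def by force
      ultimately have "x \<notin> U" using \<open>x \<in> closure \<Omega>\<close> open_Int_closure_eq_empty by blast
      then show False using x \<open>h x > x \<bullet> v\<close> unfolding U_def by simp
    qed
    ultimately show "h x = x \<bullet> v" by simp
  next
    assume on_graph: "h x = x \<bullet> v"
    have "x \<in> closure \<Omega>"
      unfolding closure_approachable
    proof (intro allI impI)
      fix e :: real assume "e > 0"
      define t where "t = min e (r - dist p x) / 2"
      have t: "0 < t" "t < e" "t < r - dist p x" using \<open>e > 0\<close> x unfolding t_def by auto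
      have dist_shift: "dist (x + t *\<^sub>R v) x = t"
        using t \<open>v \<bullet> v = 1\<close> by (simp add: dist_norm norm_eq_sqrt_inner)
      then have "x + t *\<^sub>R v \<in> ball p r"
        using t dist_triangle[of p "x + t *\<^sub>R v" x] by (simp add: dist_commute)
      moreover have "(x + t *\<^sub>R v) \<bullet> v = x \<bullet> v + t"
        using \<open>v \<bullet> v = 1\<close> by (simp add: inner_add_left)
      ultimately have "x + t *\<^sub>R v \<in> \<Omega>" using in_\<Omega> h_invariant on_graph t by simp
      then show "\<exists>y\<in>\<Omega>. dist y x < e" using dist_shift t by (intro bexI[of _ "x + t *\<^sub>R v"]) auto
    qed
    moreover have "x \<notin> \<Omega>" using in_\<Omega>[OF x] on_graph by simp
    ultimately show "x \<in> frontier \<Omega>" using frontier_eq by simp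
  qed
qed

lemma connected_closed_patch_of_local_retraction:
  fixes \<psi> :: "'a::euclidean_space \<Rightarrow> 'a"
  assumes "continuous_on (ball p r) \<psi>" and "p \<in> S" and "r > 0" and "\<epsilon> > 0"
    and fixes_S: "\<And>x. x \<in> S \<Longrightarrow> x \<in> ball p r \<Longrightarrow> \<psi> x = x"
    and into_S: "\<And>x. x \<in> ball p r \<Longrightarrow> \<psi> x \<in> ball p r \<Longrightarrow> \<psi> x \<in> S"
  shows "\<exists>T. T \<subseteq> S \<and> connected T \<and> closed T \<and> T \<subseteq> cball p \<epsilon> \<and>
             p \<in> (top_of_set S) interior_of T"
proof -
  have "\<psi> p = p" using fixes_S \<open>p \<in> S\<close> \<open>r > 0\<close> by simp
  have "isCont \<psi> p" using assms(1) \<open>r > 0\<close> by (simp add: continuous_on_eq_continuous_at)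
  moreover have "min r \<epsilon> > 0" using \<open>r > 0\<close> \<open>\<epsilon> > 0\<close> by simp
  ultimately obtain \<delta>\<^sub>0 where "\<delta>\<^sub>0 > 0" and \<delta>\<^sub>0: "\<And>x. dist x p < \<delta>\<^sub>0 \<Longrightarrow> dist (\<psi> x) p < min r \<epsilon>"
    using \<open>\<psi> p = p\<close> unfolding continuous_at_eps_delta by metis
  define \<delta> where "\<delta> = min r \<delta>\<^sub>0 / 2"
  have "\<delta> > 0" and "cball p \<delta> \<subseteq> ball p r" and small: "\<And>x. x \<in> cball p \<delta> \<Longrightarrow> dist x p < \<delta>\<^sub>0"
    using \<open>r > 0\<close> \<open>\<delta>\<^sub>0 > 0\<close> unfolding \<delta>_def by (auto simp: dist_commute)
  define T where "T = \<psi> ` cball p \<delta>"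
  have continuous: "continuous_on (cball p \<delta>) \<psi>"
    using assms(1) \<open>cball p \<delta> \<subseteq> ball p r\<close> by (rule continuous_on_subset)
  have T_small: "T \<subseteq> ball p (min r \<epsilon>)"
    using \<delta>\<^sub>0 small unfolding T_def by (auto simp: dist_commute)
  have "T \<subseteq> S"
  proof
    fix y assume "y \<in> T"
    then obtain x where "x \<in> cball p \<delta>" and "y = \<psi> x" unfolding T_def by blast
    moreover have "y \<in> ball p r" using T_small \<open>y \<in> T\<close> by auto
    ultimately show "y \<in> S" using into_S \<open>cball p \<delta> \<subseteq> ball p r\<close> by blast
  qed
  moreover have "connected T"
    unfolding T_def by (intro connected_continuous_image continuous connected_cball)
  moreover have "closed T"
    unfolding T_def by (intro compact_imp_closed compact_continuous_image continuous compact_cball)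
  moreover have "T \<subseteq> cball p \<epsilon>" using T_small by auto
  moreover have "p \<in> (top_of_set S) interior_of T"
  proof -
    have "S \<inter> ball p \<delta> \<subseteq> T"
    proof
      fix x assume "x \<in> S \<inter> ball p \<delta>"
      then have "x \<in> cball p \<delta>" by auto
      then have "\<psi> x = x" using fixes_S \<open>x \<in> S \<inter> ball p \<delta>\<close> \<open>cball p \<delta> \<subseteq> ball p r\<close> by blast
      with \<open>x \<in> cball p \<delta>\<close> show "x \<in> T" unfolding T_def by (metis image_eqI)
    qed
    then have "S \<inter> ball p \<delta> \<subseteq> (top_of_set S) interior_of T"
      by (simp add: interior_of_maximal openin_open_Int)
    then show ?thesis using \<open>p \<in> S\<close> \<open>\<delta> > 0\<close> by auto
  qed
  ultimately show ?thesis by blast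
qed

lemma Ck_boundary_frontier_patch:
  fixes \<Omega> :: "'a::euclidean_space set"
  assumes "open \<Omega>" and "Ck_boundary k \<Omega>" and "p \<in> frontier \<Omega>" and "\<epsilon> > 0"
  shows "\<exists>T. T \<subseteq> frontier \<Omega> \<and> connected T \<and> closed T \<and> T \<subseteq> cball p \<epsilon> \<and>
             p \<in> (top_of_set (frontier \<Omega>)) interior_of T"
proof -
  obtain r v g where "r > 0" and "norm v = 1" and "Ck_on k UNIV g"
    and local_subgraph: "\<Omega> \<inter> ball p r = {x \<in> ball p r. g (x - (x \<bullet> v) *\<^sub>R v) < x \<bullet> v}"
    using assms(2,3) unfolding Ck_boundary_def by blast
  have "v \<bullet> v = 1" using \<open>norm v = 1\<close> by (simp add: norm_eq_sqrt_inner)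
  define h where "h x = g (x - (x \<bullet> v) *\<^sub>R v)" for x
  have "continuous_on UNIV g" using \<open>Ck_on k UNIV g\<close> by (rule Ck_on_imp_continuous_on)
  then have h_continuous: "continuous_on UNIV h"
    unfolding h_def by (rule continuous_on_compose2) (intro continuous_intros, simp)
  have h_invariant: "h (x + t *\<^sub>R v) = h x" for x t
    using \<open>v \<bullet> v = 1\<close> unfolding h_def by (simp add: inner_add_left scaleR_add_left)
  have "\<Omega> \<inter> ball p r = {x \<in> ball p r. h x < x \<bullet> v}"
    using local_subgraph by (simp add: h_def)
  note frontier_iff =
    frontier_local_subgraph_iff[OF \<open>open \<Omega>\<close> \<open>v \<bullet> v = 1\<close> h_continuous h_invariant this]
  define \<psi> where "\<psi> x = x + (h x - x \<bullet> v) *\<^sub>R v" for x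
  have on_graph: "h (\<psi> x) = \<psi> x \<bullet> v" for x
    using h_invariant \<open>v \<bullet> v = 1\<close> unfolding \<psi>_def by (simp add: inner_add_left)
  have "continuous_on (ball p r) \<psi>"
    unfolding \<psi>_def by (intro continuous_intros continuous_on_subset[OF h_continuous]) auto
  moreover have "\<psi> x = x" if "x \<in> frontier \<Omega>" "x \<in> ball p r" for x
    using frontier_iff that unfolding \<psi>_def by simp
  moreover have "\<psi> x \<in> frontier \<Omega>" if "\<psi> x \<in> ball p r" for x
    using frontier_iff[OF that] on_graph by blast
  ultimately show ?thesis
    using connected_closed_patch_of_local_retraction[OF _ \<open>p \<in> frontier \<Omega>\<close> \<open>r > 0\<close> \<open>\<epsilon> > 0\<close>]
    by blast
qed

lemma finite_imp_uniformly_discrete: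
  fixes G :: "'a::metric_space set"
  assumes "finite G"
  obtains e where "e > 0" and "\<And>p p'. p \<in> G \<Longrightarrow> p' \<in> G \<Longrightarrow> p \<noteq> p' \<Longrightarrow> e \<le> dist p p'"
proof -
  obtain \<delta> where \<delta>: "\<And>p. p \<in> G \<Longrightarrow> \<delta> p > 0 \<and> (\<forall>p'\<in>G. p' \<noteq> p \<longrightarrow> \<delta> p \<le> dist p p')"
    using finite_set_avoid[OF assms] by metis
  define e where "e = Min (insert 1 (\<delta> ` G))"
  have "e > 0" using \<delta> assms unfolding e_def by auto
  moreover have "e \<le> dist p p'" if "p \<in> G" "p' \<in> G" "p \<noteq> p'" for p p'
  proof -
    have "e \<le> \<delta> p" using assms that unfolding e_def by simp
    also have "\<dots> \<le> dist p p'" using \<delta> that by auto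
    finally show ?thesis .
  qed
  ultimately show ?thesis using that by blast
qed

lemma Ck_boundary_disjoint_patches:
  fixes \<Omega> :: "'a::euclidean_space set"
  assumes "open \<Omega>" and "Ck_boundary k \<Omega>" and "finite G" and "G \<subseteq> frontier \<Omega>"
  obtains \<epsilon> T where "\<epsilon> > 0"
    and "\<And>p. p \<in> G \<Longrightarrow> T p \<subseteq> frontier \<Omega> \<and> connected (T p) \<and> closed (T p) \<and>
               T p \<subseteq> cball p \<epsilon> \<and> p \<in> (top_of_set (frontier \<Omega>)) interior_of (T p)"
    and "\<And>p p'. p \<in> G \<Longrightarrow> p' \<in> G \<Longrightarrow> p \<noteq> p' \<Longrightarrow> T p \<inter> T p' = {}"
proof -
  obtain e where "e > 0"
    and separated: "\<And>p p'. p \<in> G \<Longrightarrow> p' \<in> G \<Longrightarrow> p \<noteq> p' \<Longrightarrow> e \<le> dist p p'"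
    using finite_imp_uniformly_discrete[OF \<open>finite G\<close>] by blast
  define \<epsilon> where "\<epsilon> = e / 3"
  have "\<epsilon> > 0" using \<open>e > 0\<close> unfolding \<epsilon>_def by simp
  have "\<forall>p\<in>G. \<exists>T. T \<subseteq> frontier \<Omega> \<and> connected T \<and> closed T \<and> T \<subseteq> cball p \<epsilon> \<and>
                  p \<in> (top_of_set (frontier \<Omega>)) interior_of T"
    using Ck_boundary_frontier_patch[OF \<open>open \<Omega>\<close> \<open>Ck_boundary k \<Omega>\<close> _ \<open>\<epsilon> > 0\<close>]
      \<open>G \<subseteq> frontier \<Omega>\<close> by blast
  then obtain T where T: "\<And>p. p \<in> G \<Longrightarrow> T p \<subseteq> frontier \<Omega> \<and> connected (T p) \<and> closed (T p) \<and>
      T p \<subseteq> cball p \<epsilon> \<and> p \<in> (top_of_set (frontier \<Omega>)) interior_of (T p)"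
    by metis
  have disjoint: "T p \<inter> T p' = {}" if "p \<in> G" "p' \<in> G" "p \<noteq> p'" for p p'
  proof (rule ccontr)
    assume "T p \<inter> T p' \<noteq> {}"
    then obtain x where "x \<in> T p" and "x \<in> T p'" by blast
    then have "dist p x \<le> \<epsilon>" and "dist p' x \<le> \<epsilon>" using T[OF that(1)] T[OF that(2)] by auto
    then have "dist p p' \<le> 2 * \<epsilon>" using dist_triangle[of p p' x] by (simp add: dist_commute)
    then show False using separated[OF that] \<open>\<epsilon> > 0\<close> unfolding \<epsilon>_def by simp
  qed
  show ?thesis by (rule that[OF \<open>\<epsilon> > 0\<close> T disjoint])
qed

lemma contact_points_nonempty:
  fixes S :: "'a::heine_borel set"
  assumes "closed S" and "S \<noteq> {}"
  shows "contact_points S q \<noteq> {}"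
proof -
  obtain p where "p \<in> S" and "infdist q S = dist q p"
    using infdist_attains_inf[OF assms] .
  then have "p \<in> contact_points S q" unfolding contact_points_def by simp
  then show ?thesis by blast
qed

lemma infdist_gap_off_contact_points:
  fixes S :: "'a::heine_borel set"
  assumes "closed S" and "openin (top_of_set S) U" and "contact_points S q \<subseteq> U"
  obtains \<eta> where "\<eta> > 0" and "\<And>s. s \<in> S - U \<Longrightarrow> infdist q S + \<eta> \<le> dist q s"
proof (cases "S - U = {}")
  case True
  then show ?thesis using that[of 1] by auto
next
  case False
  have "closedin (top_of_set S) (S - U)"
    using closedin_diff[OF closedin_topspace assms(2)] by simp
  then have "closed (S - U)" using \<open>closed S\<close> by (rule closedin_closed_trans)
  then obtain c where c: "c \<in> S - U" and "infdist q (S - U) = dist q c"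
    using False by (rule infdist_attains_inf)
  then have nearest: "dist q c \<le> dist q s" if "s \<in> S - U" for s
    using infdist_le[OF that, of q] by simp
  have "c \<notin> contact_points S q" using c assms(3) by blast
  then have "infdist q S \<noteq> dist q c" using c unfolding contact_points_def by simp
  moreover have "infdist q S \<le> dist q c" using c by (simp add: infdist_le)
  ultimately have "dist q c - infdist q S > 0" by simp
  moreover have "infdist q S + (dist q c - infdist q S) \<le> dist q s" if "s \<in> S - U" for s
    using nearest[OF that] by simp
  ultimately show ?thesis by (rule that)
qed

lemma infdist_eq_Min_infdist_patches_near:
  fixes S :: "'a::heine_borel set"
  assumes "closed S" and "S \<noteq> {}" and finite: "finite (contact_points S q)"
    and patch: "\<And>p. p \<in> contact_points S q \<Longrightarrow>
                  T p \<subseteq> S \<and> p \<in> (top_of_set S) interior_of (T p)"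
  shows "\<exists>N. open N \<and> q \<in> N \<and>
           (\<forall>x\<in>N. infdist x S = Min ((\<lambda>p. infdist x (T p)) ` contact_points S q))"
proof -
  define G where "G = contact_points S q"
  define U where "U = (\<Union>p\<in>G. (top_of_set S) interior_of (T p))"
  have U_open: "openin (top_of_set S) U" unfolding U_def by (intro openin_Union) auto
  have contact_in_U: "contact_points S q \<subseteq> U" using patch unfolding U_def G_def by blast
  obtain \<eta> where "\<eta> > 0" and gap: "\<And>s. s \<in> S - U \<Longrightarrow> infdist q S + \<eta> \<le> dist q s"
    using infdist_gap_off_contact_points[OF \<open>closed S\<close> U_open contact_in_U] by blast
  have "infdist x S = Min ((\<lambda>p. infdist x (T p)) ` G)" if x: "x \<in> ball q (\<eta> / 2)" for x
  proof (rule antisym)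
    have "p \<in> T p" if "p \<in> G" for p
      using patch[folded G_def, OF that] interior_of_subset[of "top_of_set S" "T p"] by blast
    then have "infdist x S \<le> infdist x (T p)" if "p \<in> G" for p
      using patch[folded G_def, OF that] that by (intro infdist_mono) auto
    moreover have "G \<noteq> {}" and "finite G"
      using contact_points_nonempty[OF assms(1,2)] finite unfolding G_def by auto
    ultimately show "infdist x S \<le> Min ((\<lambda>p. infdist x (T p)) ` G)" by simp
  next
    obtain s where "s \<in> S" and s: "infdist x S = dist x s"
      using infdist_attains_inf[OF assms(1,2)] .
    have "dist x s \<le> infdist q S + dist x q"
      using s infdist_triangle[of x S q] by simp
    then have "dist q s < infdist q S + \<eta>"
      using x dist_triangle[of q s x] by (simp add: dist_commute)
    then have "s \<in> U" using gap \<open>s \<in> S\<close> by force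
    then obtain p where "p \<in> G" and "s \<in> (top_of_set S) interior_of (T p)"
      unfolding U_def by blast
    then have "s \<in> T p" using interior_of_subset[of "top_of_set S" "T p"] by blast
    have "Min ((\<lambda>p. infdist x (T p)) ` G) \<le> infdist x (T p)"
      using finite \<open>p \<in> G\<close> unfolding G_def by simp
    also have "\<dots> \<le> infdist x S" using s infdist_le[OF \<open>s \<in> T p\<close>] by simp
    finally show "Min ((\<lambda>p. infdist x (T p)) ` G) \<le> infdist x S" .
  qed
  then show ?thesis
    using \<open>\<eta> > 0\<close> unfolding G_def by (intro exI[of _ "ball q (\<eta> / 2)"]) auto
qed

theorem lemma3p12:
  fixes \<Omega> :: "'a::euclidean_space set" and q :: 'a and k :: nat
  assumes "open \<Omega>" and "bounded \<Omega>" and "\<Omega> \<noteq> {}"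
    and "k \<ge> 2" and "Ck_boundary k \<Omega>"
    and "q \<notin> frontier \<Omega>"
    and "finite (contact_points (frontier \<Omega>) q)"
  shows "\<exists>r > infdist q (frontier \<Omega>). \<exists>T :: 'a \<Rightarrow> 'a set.
           (\<forall>p\<in>contact_points (frontier \<Omega>) q.
               T p \<subseteq> frontier \<Omega> \<and> connected (T p) \<and> closed (T p) \<and>
               T p \<subseteq> cball q r \<and>
               p \<in> (top_of_set (frontier \<Omega>)) interior_of (T p)) \<and>
           (\<forall>p\<in>contact_points (frontier \<Omega>) q. \<forall>p'\<in>contact_points (frontier \<Omega>) q.
               p \<noteq> p' \<longrightarrow> T p \<inter> T p' = {}) \<and>
           (\<exists>N. open N \<and> q \<in> N \<and>
               (\<forall>x\<in>N. infdist x (frontier \<Omega>) =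
                   Min ((\<lambda>p. infdist x (T p)) ` contact_points (frontier \<Omega>) q)))"
proof -
  let ?S = "frontier \<Omega>" and ?G = "contact_points (frontier \<Omega>) q"
  have "closed ?S" by simp
  have "?S \<noteq> {}"
    using frontier_not_empty \<open>\<Omega> \<noteq> {}\<close> \<open>bounded \<Omega>\<close> not_bounded_UNIV by blast
  have "?G \<subseteq> ?S" unfolding contact_points_def by blast
  then obtain \<epsilon> T where "\<epsilon> > 0"
    and T: "\<And>p. p \<in> ?G \<Longrightarrow> T p \<subseteq> ?S \<and> connected (T p) \<and> closed (T p) \<and>
               T p \<subseteq> cball p \<epsilon> \<and> p \<in> (top_of_set ?S) interior_of (T p)"
    and disjoint: "\<And>p p'. p \<in> ?G \<Longrightarrow> p' \<in> ?G \<Longrightarrow> p \<noteq> p' \<Longrightarrow> T p \<inter> T p' = {}"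
    using Ck_boundary_disjoint_patches[OF \<open>open \<Omega>\<close> \<open>Ck_boundary k \<Omega>\<close> assms(7)] by blast
  have "T p \<subseteq> cball q (infdist q ?S + \<epsilon>)" if "p \<in> ?G" for p
  proof
    fix x assume "x \<in> T p"
    then have "dist p x \<le> \<epsilon>" using T[OF that] by auto
    moreover have "dist q p = infdist q ?S" using that unfolding contact_points_def by simp
    ultimately show "x \<in> cball q (infdist q ?S + \<epsilon>)" using dist_triangle[of q x p] by simp
  qed
  moreover have "\<exists>N. open N \<and> q \<in> N \<and> (\<forall>x\<in>N. infdist x ?S = Min ((\<lambda>p. infdist x (T p)) ` ?G))"
    by (rule infdist_eq_Min_infdist_patches_near[OF \<open>closed ?S\<close> \<open>?S \<noteq> {}\<close> assms(7)])
      (use T in blast)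
  ultimately show ?thesis
    using T disjoint \<open>\<epsilon> > 0\<close> by (intro exI[of _ "infdist q ?S + \<epsilon>"] conjI exI[of _ T]) auto
qed

end
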